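(* Consider a one-site PTM cascade with $n=1$ layer (species $E,S^0,S^1,F,Y^0,Y^1$, constants $\delta,\gamma,\lambda$) and positive total amounts $\overline{E},\overline{F},\overline{S}$. Let $\Delta=\gamma\overline{F}-\delta\overline{E}$, $q_1(s)=1+\delta s$, $q_2(s)=\overline{E}-\Delta s$, $p(s)=\lambda\overline{F}q_1(s)+q_1(s)q_2(s)+(\gamma+\delta)\overline{F}q_2(s)$, and $\varphi(s)=\frac{s\,p(s)}{q_1(s)q_2(s)}$. Let $\Gamma=[0,\infty)$ if $\Delta\le0$ and $\Gamma=[0,\overline{E}/\Delta)$ if $\Delta>0$. Then: (i) the system has a unique BMSS; (ii) the restriction of $\varphi$ to $\Gamma$ is a continuous increasing bijection $\Gamma\to[0,\infty)$, and its inverse $\psi:[0,\infty)\to\Gamma$ is continuous, increasing, satisfies $\psi(0)=0$, and for every $\overline{S}>0$ the BMSS value of $S^1$ equals $\psi(\overline{S})$.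
   Context: For $n=1$ the one-site PTM cascade has species $E,S^0,S^1,F,Y^0,Y^1$ with reactions $E+S^0\rightleftharpoons Y^0\to E+S^1$ (rate constants $a^0,b^0,c^0$) and $F+S^1\rightleftharpoons Y^1\to F+S^0$ (rate constants $a^1,b^1,c^1$), all positive, mass-action kinetics. Put $\delta=a^1/(b^1+c^1)$, $\gamma=(c^1/c^0)\delta$, $\lambda=\frac{b^0+c^0}{a^0}\gamma$. A steady state for total amounts $\overline{E},\overline{F},\overline{S}$ is a real solution of $Y^0=\gamma FS^1$, $Y^1=\delta FS^1$, $\lambda FS^1=S^0E$, $\overline{F}=F+Y^1$, $\overline{E}=E+Y^0$, $\overline{S}=S^0+S^1+Y^0+Y^1$. A BMSS (biologically meaningful steady state) is a steady state with positive total amounts and all concentrations nonnegative. A function is called increasing if it is strictly increasing. *)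

theory Defs
  imports "HOL-Analysis.Analysis"
begin

text \<open>The reduced steady-state equations for the n = 1 PTM cascade, with constants
  delta, gamma, lambda (written d, g, l) and total amounts Eb, Fb, Sb.\<close>

definition ptm_steady_state ::
  "real \<Rightarrow> real \<Rightarrow> real \<Rightarrow> real \<Rightarrow> real \<Rightarrow> real \<Rightarrow>
   real \<times> real \<times> real \<times> real \<times> real \<times> real \<Rightarrow> bool" where
  "ptm_steady_state d g l Eb Fb Sb c =
     (case c of (E, S0, S1, F, Y0, Y1) \<Rightarrow>
        Y0 = g * F * S1 \<and> Y1 = d * F * S1 \<and> l * F * S1 = S0 * E \<and>
        Fb = F + Y1 \<and> Eb = E + Y0 \<and> Sb = S0 + S1 + Y0 + Y1)"

text \<open>Biologically meaningful steady state: positive totals, nonnegative concentrations.\<close>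

definition ptm_BMSS ::
  "real \<Rightarrow> real \<Rightarrow> real \<Rightarrow> real \<Rightarrow> real \<Rightarrow> real \<Rightarrow>
   real \<times> real \<times> real \<times> real \<times> real \<times> real \<Rightarrow> bool" where
  "ptm_BMSS d g l Eb Fb Sb c =
     (ptm_steady_state d g l Eb Fb Sb c \<and> Eb > 0 \<and> Fb > 0 \<and> Sb > 0 \<and>
      (case c of (E, S0, S1, F, Y0, Y1) \<Rightarrow>
        E \<ge> 0 \<and> S0 \<ge> 0 \<and> S1 \<ge> 0 \<and> F \<ge> 0 \<and> Y0 \<ge> 0 \<and> Y1 \<ge> 0))"

end

theory Submission
  imports Defs
begin

text \<open>
  Analysis of phi: on Gamma,
    phi s = s + lam Fb s / q2 s + (gamma + delta) Fb s / q1 s,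
  a sum of a strictly increasing and two nondecreasing continuous terms; phi 0 = 0 and
  phi is unbounded, so by the intermediate value theorem phi is an increasing continuous
  bijection Gamma \<rightarrow> [0,\<infinity>).  Its inverse psi is then increasing and, since Gamma is an
  interval, continuous (general lemmas about inverses of monotone real functions).

  Algebra of the steady states: the steady-state equations force
    F = Fb / q1 S1,  E = q2 S1 / q1 S1,  S0 = lam Fb S1 / q2 S1,  phi S1 = Sb,
  and in a BMSS S1 \<in> Gamma; conversely these formulas give a BMSS for every S1 \<in> Gamma.
  So the BMSS for the total Sb is unique, with S1 = psi Sb.
\<close>

lemma strict_mono_on_inv_into:
  fixes f :: "'a::linorder \<Rightarrow> 'b::linorder"
  assumes mono: "strict_mono_on S f"
  shows "strict_mono_on (f ` S) (inv_into S f)"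
proof (rule strict_mono_onI)
  fix u v assume "u \<in> f ` S" "v \<in> f ` S" "u < v"
  then obtain x y where "x \<in> S" "y \<in> S" "u = f x" "v = f y" "f x < f y" by blast
  moreover have "inj_on f S" using mono by (rule strict_mono_on_imp_inj_on)
  ultimately show "inv_into S f u < inv_into S f v"
    using strict_mono_on_less[OF mono] by (simp add: inv_into_f_f)
qed

text \<open>The inverse of a continuous strictly increasing real function on an interval S is
  continuous on f ` S.  Around y = f x it agrees with the inverse of f restricted to a
  compact interval [a, b] \<subseteq> S, where a < x < b unless x is an endpoint of S; that
  restriction has a continuous inverse because [a, b] is compact, and f ` [a, b] is a
  neighbourhood of y within f ` S.\<close>

lemma continuous_on_inv_into_interval:
  fixes f :: "real \<Rightarrow> real"
  assumes S: "is_interval S" and cont: "continuous_on S f" and mono: "strict_mono_on S f"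
  shows "continuous_on (f ` S) (inv_into S f)"
  unfolding continuous_on_eq_continuous_within
proof
  fix y assume "y \<in> f ` S"
  then obtain x where x: "x \<in> S" "y = f x" by blast
  obtain a where a: "a \<in> S" "a \<le> x" "a < x \<or> (\<forall>s\<in>S. x \<le> s)"
  proof (cases "\<exists>s\<in>S. s < x")
    case True
    then show ?thesis using that by (auto intro: less_imp_le)
  next
    case False
    then show ?thesis using that[of x] x(1) by (auto simp: not_less)
  qed
  obtain b where b: "b \<in> S" "x \<le> b" "x < b \<or> (\<forall>s\<in>S. s \<le> x)"
  proof (cases "\<exists>s\<in>S. x < s")
    case True
    then show ?thesis using that by (auto intro: less_imp_le)
  next
    case False
    then show ?thesis using that[of x] x(1) by (auto simp: not_less)
  qed
  have ab: "{a..b} \<subseteq> S"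
  proof
    fix z assume "z \<in> {a..b}"
    then show "z \<in> S" using S a(1) b(1) unfolding is_interval_1 atLeastAtMost_iff by blast
  qed
  have inj: "inj_on f S" using mono by (rule strict_mono_on_imp_inj_on)
  have "continuous_on (f ` {a..b}) (inv_into S f)"
    by (rule continuous_on_inv[OF continuous_on_subset[OF cont ab] compact_Icc])
      (use ab inj in \<open>auto simp: inv_into_f_f\<close>)
  moreover have "y \<in> f ` {a..b}" using x a(2) b(2) by simp
  ultimately have cont_ab: "continuous (at y within f ` {a..b}) (inv_into S f)"
    by (meson continuous_on_eq_continuous_within)
  define U where "U = (if a < x then {f a<..} else UNIV) \<inter> (if x < b then {..<f b} else UNIV)"
  have "open U" unfolding U_def by (intro open_Int) auto
  moreover have "y \<in> U"
    using strict_mono_onD[OF mono a(1) x(1)] strict_mono_onD[OF mono x(1) b(1)]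
    unfolding U_def x(2) by auto
  moreover have "f ` S \<inter> U - {y} = f ` {a..b} \<inter> U - {y}"
  proof -
    have "z \<in> {a..b}" if z: "z \<in> S" "f z \<in> U" for z
    proof -
      have "a \<le> z"
      proof (rule ccontr)
        assume "\<not> a \<le> z"
        then have "z < a" "a < x" using a z(1) by auto
        then show False
          using z(2) strict_mono_on_less[OF mono z(1) a(1)] unfolding U_def by auto
      qed
      moreover have "z \<le> b"
      proof (rule ccontr)
        assume "\<not> z \<le> b"
        then have "b < z" "x < b" using b z(1) by auto
        then show False
          using z(2) strict_mono_on_less[OF mono b(1) z(1)] unfolding U_def by auto
      qed
      ultimately show ?thesis by simp
    qed
    then show ?thesis using ab by blast
  qed
  ultimately have "at y within f ` S = at y within f ` {a..b}"
    by (intro at_within_nhd[of y U])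
  then show "continuous (at y within f ` S) (inv_into S f)"
    using cont_ab by simp
qed

text \<open>The one-site cascade with positive constants delta, gamma, lam and positive
  totals Eb, Fb of the two enzymes; the rate constants enter only through these.\<close>

locale ptm_one_site =
  fixes \<delta> \<gamma> lam Eb Fb :: real
  assumes \<delta>_pos: "\<delta> > 0" and \<gamma>_pos: "\<gamma> > 0" and lam_pos: "lam > 0"
    and Eb_pos: "Eb > 0" and Fb_pos: "Fb > 0"
begin

definition Delta :: real where "Delta = \<gamma> * Fb - \<delta> * Eb"
definition q1 :: "real \<Rightarrow> real" where "q1 s = 1 + \<delta> * s"
definition q2 :: "real \<Rightarrow> real" where "q2 s = Eb - Delta * s"
definition p :: "real \<Rightarrow> real" where
  "p s = lam * Fb * q1 s + q1 s * q2 s + (\<gamma> + \<delta>) * Fb * q2 s"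
definition phi :: "real \<Rightarrow> real" where "phi s = s * p s / (q1 s * q2 s)"
definition Gamma :: "real set" where "Gamma = {s. 0 \<le> s \<and> 0 < q2 s}"
definition psi :: "real \<Rightarrow> real" where "psi = inv_into Gamma phi"

lemma Gamma_eq: "Gamma = (if Delta \<le> 0 then {0..} else {0..<Eb / Delta})"
proof (cases "Delta \<le> 0")
  case True
  have "0 < q2 s" if "0 \<le> s" for s
    using Eb_pos mult_nonpos_nonneg[OF True that] unfolding q2_def by linarith
  then show ?thesis using True unfolding Gamma_def by (intro set_eqI) force
next
  case False
  have "0 < q2 s \<longleftrightarrow> s < Eb / Delta" for s
    using pos_less_divide_eq[of Delta s Eb] False unfolding q2_def by (simp add: mult.commute)
  then show ?thesis using False unfolding Gamma_def by (intro set_eqI) force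
qed

lemma Gamma_interval: "is_interval Gamma"
  unfolding Gamma_eq by (simp add: is_interval_co)

lemma q1_pos: "0 \<le> s \<Longrightarrow> 0 < q1 s"
  using \<delta>_pos by (simp add: q1_def add_pos_nonneg)

lemma Gamma_D: "s \<in> Gamma \<Longrightarrow> 0 \<le> s \<and> 0 < q1 s \<and> 0 < q2 s"
  using q1_pos by (simp add: Gamma_def)

text \<open>Partial fractions: since p = lam Fb q1 + q1 q2 + (gamma + delta) Fb q2, phi splits
  into three terms whose monotonicity is easy to see.\<close>

lemma phi_split:
  assumes "s \<in> Gamma"
  shows "phi s = s + lam * Fb * (s / q2 s) + (\<gamma> + \<delta>) * Fb * (s / q1 s)"
proof -
  have "q1 s \<noteq> 0" "q2 s \<noteq> 0" using Gamma_D[OF assms] by auto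
  then show ?thesis unfolding phi_def p_def by (simp add: field_simps)
qed

lemma phi_zero: "phi 0 = 0"
  by (simp add: phi_def)

lemma zero_in_Gamma: "0 \<in> Gamma"
  using Eb_pos by (simp add: Gamma_def q2_def)

lemma phi_nonneg: "s \<in> Gamma \<Longrightarrow> 0 \<le> phi s"
  using Gamma_D[of s] phi_split[of s] lam_pos \<gamma>_pos \<delta>_pos Fb_pos
  by (simp add: add_nonneg_nonneg)

text \<open>Both fractions in the decomposition of phi are nondecreasing on Gamma:
  s/q1 s because q1 has positive slope and intercept 1, s/q2 s because
  s * q2 t - t * q2 s = (s - t) * Eb.\<close>

lemma ratio_q1_mono:
  assumes "s \<in> Gamma" "t \<in> Gamma" "s \<le> t"
  shows "s / q1 s \<le> t / q1 t"
proof -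
  have "s * q1 t \<le> t * q1 s" using assms(3) by (simp add: q1_def algebra_simps)
  then show ?thesis using Gamma_D[OF assms(1)] Gamma_D[OF assms(2)]
    by (simp add: divide_simps mult.commute)
qed

lemma ratio_q2_mono:
  assumes "s \<in> Gamma" "t \<in> Gamma" "s \<le> t"
  shows "s / q2 s \<le> t / q2 t"
proof -
  have "s * q2 t - t * q2 s = (s - t) * Eb" by (simp add: q2_def algebra_simps)
  also have "\<dots> \<le> 0" using assms(3) Eb_pos by (simp add: mult_nonpos_nonneg)
  finally have "s * q2 t \<le> t * q2 s" by simp
  then show ?thesis using Gamma_D[OF assms(1)] Gamma_D[OF assms(2)]
    by (simp add: divide_simps mult.commute)
qed

lemma phi_strict_mono: "strict_mono_on Gamma phi"
proof (rule strict_mono_onI)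
  fix s t assume st: "s \<in> Gamma" "t \<in> Gamma" "s < t"
  have "lam * Fb * (s / q2 s) \<le> lam * Fb * (t / q2 t)"
    using ratio_q2_mono[of s t] st lam_pos Fb_pos by (intro mult_left_mono) auto
  moreover have "(\<gamma> + \<delta>) * Fb * (s / q1 s) \<le> (\<gamma> + \<delta>) * Fb * (t / q1 t)"
    using ratio_q1_mono[of s t] st \<gamma>_pos \<delta>_pos Fb_pos by (intro mult_left_mono) auto
  ultimately show "phi s < phi t" using phi_split st by simp
qed

lemma phi_continuous: "continuous_on Gamma phi"
proof -
  have "continuous_on Gamma (\<lambda>s. s + lam * Fb * (s / q2 s) + (\<gamma> + \<delta>) * Fb * (s / q1 s))"
    unfolding q1_def q2_def
    by (intro continuous_intros) (auto dest!: Gamma_D simp: q1_def q2_def)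
  then show ?thesis by (rule continuous_on_cong[THEN iffD1, rotated 2]) (simp_all add: phi_split)
qed

text \<open>If Delta \<le> 0 then phi s \<ge> s on Gamma = [0,\<infinity>);
  otherwise the term lam*Fb*s/q2 s alone attains every value y \<ge> 0, at the point
  t = y*Eb/(lam*Fb + y*Delta) < Eb/Delta.\<close>

lemma phi_unbounded:
  assumes y: "0 \<le> y"
  shows "\<exists>t\<in>Gamma. y \<le> phi t"
proof (cases "Delta \<le> 0")
  case True
  then have "y \<in> Gamma" using y by (simp add: Gamma_eq)
  moreover have "0 \<le> lam * Fb * (y / q2 y) + (\<gamma> + \<delta>) * Fb * (y / q1 y)"
    using Gamma_D[OF \<open>y \<in> Gamma\<close>] lam_pos \<gamma>_pos \<delta>_pos Fb_pos by simp
  ultimately show ?thesis using phi_split[OF \<open>y \<in> Gamma\<close>] by (intro bexI[of _ y]) auto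
next
  case False
  define t where "t = y * Eb / (lam * Fb + y * Delta)"
  have den: "0 < lam * Fb + y * Delta" using False lam_pos Fb_pos y by (simp add: add_pos_nonneg)
  have q2t: "q2 t = Eb * lam * Fb / (lam * Fb + y * Delta)"
    using den unfolding t_def q2_def by (simp add: field_simps)
  have "0 < q2 t" unfolding q2t using den Eb_pos Fb_pos lam_pos by simp
  moreover have "0 \<le> t" using den y Eb_pos unfolding t_def by simp
  ultimately have t: "t \<in> Gamma" by (simp add: Gamma_def)
  have "lam * Fb * t = y * q2 t"
    using den by (simp only: q2t) (simp add: t_def field_simps)
  then have "lam * Fb * (t / q2 t) = y"
    using \<open>0 < q2 t\<close> by (simp add: field_simps)
  then have "y \<le> phi t"
    using phi_split[OF t] Gamma_D[OF t] \<gamma>_pos \<delta>_pos Fb_pos by simp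
  then show ?thesis using t by blast
qed

text \<open>By the intermediate value theorem on [0, t] \<subseteq> Gamma, phi maps Gamma onto [0,\<infinity>).\<close>

lemma phi_image: "phi ` Gamma = {0..}"
proof
  show "phi ` Gamma \<subseteq> {0..}" using phi_nonneg by auto
next
  show "{0..} \<subseteq> phi ` Gamma"
  proof
    fix y :: real assume "y \<in> {0..}"
    then have y: "0 \<le> y" by simp
    then obtain t where t: "t \<in> Gamma" "y \<le> phi t" using phi_unbounded by blast
    have sub: "{0..t} \<subseteq> Gamma"
    proof
      fix z assume "z \<in> {0..t}"
      then show "z \<in> Gamma"
        using Gamma_interval zero_in_Gamma t(1) unfolding is_interval_1 atLeastAtMost_iff by blast
    qed
    have "continuous_on {0..t} phi" using phi_continuous sub by (rule continuous_on_subset)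
    moreover have "phi 0 \<le> y" "0 \<le> t" using phi_zero y Gamma_D[OF t(1)] by auto
    ultimately obtain x where "0 \<le> x" "x \<le> t" "phi x = y"
      using IVT'[of phi 0 y t] t(2) by blast
    then show "y \<in> phi ` Gamma" using sub by force
  qed
qed

lemma phi_bij: "bij_betw phi Gamma {0..}"
  unfolding bij_betw_def using strict_mono_on_imp_inj_on[OF phi_strict_mono] phi_image by blast

lemma psi_continuous: "continuous_on {0..} psi"
  using continuous_on_inv_into_interval[OF Gamma_interval phi_continuous phi_strict_mono]
  by (simp add: phi_image psi_def)

lemma psi_strict_mono: "strict_mono_on {0..} psi"
  using strict_mono_on_inv_into[OF phi_strict_mono] by (simp add: phi_image psi_def)

lemma psi_phi: "s \<in> Gamma \<Longrightarrow> psi (phi s) = s"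
  unfolding psi_def by (rule inv_into_f_f[OF strict_mono_on_imp_inj_on[OF phi_strict_mono]])

lemma psi_zero: "psi 0 = 0"
  using psi_phi[OF zero_in_Gamma] by (simp add: phi_zero)

lemma psi_in_Gamma: "0 \<le> y \<Longrightarrow> psi y \<in> Gamma"
  unfolding psi_def by (rule inv_into_into) (simp add: phi_image)

lemma phi_psi: "0 \<le> y \<Longrightarrow> phi (psi y) = y"
  unfolding psi_def by (rule f_inv_into_f) (simp add: phi_image)

definition bmss_at :: "real \<Rightarrow> real \<times> real \<times> real \<times> real \<times> real \<times> real" where
  "bmss_at s = (q2 s / q1 s, lam * Fb * s / q2 s, s, Fb / q1 s,
                \<gamma> * (Fb / q1 s) * s, \<delta> * (Fb / q1 s) * s)"

text \<open>Eliminating Y0, Y1 with the first two equations turns the conservation laws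
  into equations in F, E, S0 with coefficients q1 S1 and q2 S1.\<close>

lemma steady_state_reduced:
  assumes "ptm_steady_state \<delta> \<gamma> lam Eb Fb Sb (E, S0, S1, F, Y0, Y1)"
  shows "F * q1 S1 = Fb" and "E * q1 S1 = q2 S1" and "S0 * q2 S1 = lam * Fb * S1"
    and "Sb = S0 + S1 + (\<gamma> + \<delta>) * F * S1"
proof -
  have Y0: "Y0 = \<gamma> * F * S1" and Y1: "Y1 = \<delta> * F * S1" and bind: "lam * F * S1 = S0 * E"
    and F_tot: "Fb = F + Y1" and E_tot: "Eb = E + Y0" and S_tot: "Sb = S0 + S1 + Y0 + Y1"
    using assms by (simp_all add: ptm_steady_state_def)
  show F: "F * q1 S1 = Fb" using F_tot Y1 by (simp add: q1_def algebra_simps)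
  have "q2 S1 = Eb - (\<gamma> * Fb - \<delta> * Eb) * S1" by (simp add: q2_def Delta_def)
  also have "\<dots> = (E + \<gamma> * F * S1) - (\<gamma> * (F + \<delta> * F * S1) - \<delta> * (E + \<gamma> * F * S1)) * S1"
    using F_tot E_tot Y0 Y1 by simp
  also have "\<dots> = E * q1 S1" by (simp add: q1_def algebra_simps)
  finally show E: "E * q1 S1 = q2 S1" by simp
  have "S0 * q2 S1 = S0 * E * q1 S1" by (simp flip: E)
  also have "\<dots> = lam * Fb * S1" by (simp flip: bind F)
  finally show "S0 * q2 S1 = lam * Fb * S1" .
  show "Sb = S0 + S1 + (\<gamma> + \<delta>) * F * S1" using S_tot Y0 Y1 by (simp add: algebra_simps)
qed

text \<open>In a BMSS, q2 S1 > 0: otherwise E = 0, hence S1 = 0 by the binding equation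
  (F > 0 since F * q1 S1 = Fb), but q2 0 = Eb > 0.\<close>

lemma BMSS_S1_in_Gamma:
  assumes "ptm_BMSS \<delta> \<gamma> lam Eb Fb Sb (E, S0, S1, F, Y0, Y1)"
  shows "S1 \<in> Gamma"
proof -
  have ss: "ptm_steady_state \<delta> \<gamma> lam Eb Fb Sb (E, S0, S1, F, Y0, Y1)"
    and nonneg: "0 \<le> E" "0 \<le> S1" "0 \<le> F"
    using assms by (simp_all add: ptm_BMSS_def)
  have bind: "lam * F * S1 = S0 * E" using ss by (simp add: ptm_steady_state_def)
  have q1_S1: "0 < q1 S1" using q1_pos nonneg(2) .
  have F_pos: "0 < F"
    using steady_state_reduced(1)[OF ss] Fb_pos nonneg(3) by (cases "F = 0") auto
  have E: "E * q1 S1 = q2 S1" using steady_state_reduced(2)[OF ss] .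
  have "0 < q2 S1"
  proof (rule ccontr)
    assume "\<not> 0 < q2 S1"
    moreover have "0 \<le> q2 S1" using E nonneg(1) q1_S1 by (metis mult_nonneg_nonneg less_imp_le)
    ultimately have "E = 0" using E q1_S1 by simp
    then have "S1 = 0" using bind F_pos lam_pos by simp
    then show False using \<open>\<not> 0 < q2 S1\<close> Eb_pos by (simp add: q2_def)
  qed
  then show ?thesis using nonneg(2) by (simp add: Gamma_def)
qed

lemma BMSS_is_bmss_at:
  assumes "ptm_BMSS \<delta> \<gamma> lam Eb Fb Sb (E, S0, S1, F, Y0, Y1)"
  shows "phi S1 = Sb" and "(E, S0, S1, F, Y0, Y1) = bmss_at S1"
proof -
  have ss: "ptm_steady_state \<delta> \<gamma> lam Eb Fb Sb (E, S0, S1, F, Y0, Y1)"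
    using assms by (simp add: ptm_BMSS_def)
  have G: "S1 \<in> Gamma" using BMSS_S1_in_Gamma[OF assms] .
  note pos = Gamma_D[OF G]
  have F: "F = Fb / q1 S1" and E: "E = q2 S1 / q1 S1" and S0: "S0 = lam * Fb * S1 / q2 S1"
    using steady_state_reduced(1-3)[OF ss] pos by (simp_all add: field_simps)
  have "phi S1 = S1 + S0 + (\<gamma> + \<delta>) * F * S1"
    using phi_split[OF G] unfolding F S0 by simp
  then show "phi S1 = Sb" using steady_state_reduced(4)[OF ss] by simp
  have "Y0 = \<gamma> * F * S1" "Y1 = \<delta> * F * S1" using ss by (simp_all add: ptm_steady_state_def)
  then show "(E, S0, S1, F, Y0, Y1) = bmss_at S1" unfolding bmss_at_def E S0 F by simp
qed

lemma bmss_at_BMSS: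
  assumes Sb: "0 < Sb" and s: "s \<in> Gamma" and phi_s: "phi s = Sb"
  shows "ptm_BMSS \<delta> \<gamma> lam Eb Fb Sb (bmss_at s)"
proof -
  note pos = Gamma_D[OF s]
  have "q2 s + \<gamma> * Fb * s = Eb * q1 s" by (simp add: q1_def q2_def Delta_def algebra_simps)
  then have E_tot: "Eb = q2 s / q1 s + \<gamma> * (Fb / q1 s) * s"
    using pos by (simp add: field_simps)
  have "a + \<delta> * a * s = a * q1 s" for a by (simp add: q1_def algebra_simps)
  from this[of "Fb / q1 s"] have F_tot: "Fb = Fb / q1 s + \<delta> * (Fb / q1 s) * s" using pos by simp
  have bind: "lam * (Fb / q1 s) * s = lam * Fb * s / q2 s * (q2 s / q1 s)"
    using pos by (simp add: field_simps)
  have S_tot: "Sb = lam * Fb * s / q2 s + s + \<gamma> * (Fb / q1 s) * s + \<delta> * (Fb / q1 s) * s"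
    using phi_split[OF s] phi_s by (simp add: algebra_simps)
  show ?thesis
    unfolding ptm_BMSS_def ptm_steady_state_def bmss_at_def
    using E_tot F_tot bind S_tot Sb Eb_pos Fb_pos pos lam_pos \<gamma>_pos \<delta>_pos by simp
qed

lemma BMSS_iff:
  assumes "0 < Sb"
  shows "ptm_BMSS \<delta> \<gamma> lam Eb Fb Sb c \<longleftrightarrow> c = bmss_at (psi Sb)"
proof
  assume c: "ptm_BMSS \<delta> \<gamma> lam Eb Fb Sb c"
  obtain E S0 S1 F Y0 Y1 where c_eq: "c = (E, S0, S1, F, Y0, Y1)" by (cases c) auto
  have "S1 = psi Sb"
    using BMSS_is_bmss_at(1) psi_phi BMSS_S1_in_Gamma c unfolding c_eq by metis
  then show "c = bmss_at (psi Sb)" using BMSS_is_bmss_at(2) c unfolding c_eq by metis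
next
  assume "c = bmss_at (psi Sb)"
  then show "ptm_BMSS \<delta> \<gamma> lam Eb Fb Sb c"
    using bmss_at_BMSS assms psi_in_Gamma phi_psi by simp
qed

end

theorem mainTheorem3:
  fixes a0 b0 c0 a1 b1 c1 Eb Fb \<delta> \<gamma> lam \<Delta> :: real
    and q1 q2 p \<phi> \<psi> :: "real \<Rightarrow> real" and \<Gamma> :: "real set"
  assumes "a0 > 0" "b0 > 0" "c0 > 0" "a1 > 0" "b1 > 0" "c1 > 0"
    and "Eb > 0" "Fb > 0"
    and "\<delta> = a1 / (b1 + c1)"
    and "\<gamma> = (c1 / c0) * \<delta>"
    and "lam = ((b0 + c0) / a0) * \<gamma>"
    and "\<Delta> = \<gamma> * Fb - \<delta> * Eb"
    and "\<And>s. q1 s = 1 + \<delta> * s"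
    and "\<And>s. q2 s = Eb - \<Delta> * s"
    and "\<And>s. p s = lam * Fb * q1 s + q1 s * q2 s + (\<gamma> + \<delta>) * Fb * q2 s"
    and "\<And>s. \<phi> s = s * p s / (q1 s * q2 s)"
    and "\<Gamma> = (if \<Delta> \<le> 0 then {0..} else {0..<Eb / \<Delta>})"
    and "\<psi> = inv_into \<Gamma> \<phi>"
  shows "(\<forall>Sb > 0. \<exists>!c. ptm_BMSS \<delta> \<gamma> lam Eb Fb Sb c)
       \<and> continuous_on \<Gamma> \<phi> \<and> strict_mono_on \<Gamma> \<phi> \<and> bij_betw \<phi> \<Gamma> {0..}
       \<and> continuous_on {0..} \<psi> \<and> strict_mono_on {0..} \<psi> \<and> \<psi> 0 = 0
       \<and> (\<forall>Sb > 0. \<forall>E S0 S1 F Y0 Y1.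
            ptm_BMSS \<delta> \<gamma> lam Eb Fb Sb (E, S0, S1, F, Y0, Y1) \<longrightarrow> S1 = \<psi> Sb)"
proof -
  have "\<delta> > 0" using assms(4-6,9) by simp
  moreover have "\<gamma> > 0" using assms(3,6,10) \<open>\<delta> > 0\<close> by simp
  moreover have "lam > 0" using assms(1-3,11) \<open>\<gamma> > 0\<close> by simp
  ultimately interpret P: ptm_one_site \<delta> \<gamma> lam Eb Fb
    using assms(7,8) by unfold_locales
  have q: "q1 = P.q1" "q2 = P.q2"
    using assms(12-14) by (simp_all add: fun_eq_iff P.q1_def P.q2_def P.Delta_def)
  have \<phi>: "\<phi> = P.phi"
    using assms(15,16) by (simp add: fun_eq_iff P.phi_def P.p_def q)
  have \<Gamma>: "\<Gamma> = P.Gamma"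
    using assms(12,17) by (simp add: P.Gamma_eq P.Delta_def)
  have \<psi>: "\<psi> = P.psi"
    using assms(18) by (simp add: P.psi_def \<phi> \<Gamma>)
  show ?thesis
    unfolding \<phi> \<Gamma> \<psi>
    using P.BMSS_iff P.phi_continuous P.phi_strict_mono P.phi_bij
      P.psi_continuous P.psi_strict_mono P.psi_zero
    by (simp add: P.bmss_at_def)
qed

end
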